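(* Let $(X,\|\cdot\|)$ be a normed linear space over $\mathbb{R}$ or $\mathbb{C}$, let $a\in X\setminus\{0\}$ and $x_1,\dots,x_n\in X\setminus\{0\}$ with $\|a\|\ge\|x_j-a\|$ for each $j\in\{1,\dots,n\}$. Then for any $p_1,\dots,p_n\ge0$ with $\sum_{j=1}^n p_j=1$, $$\frac{\big\|\sum_{j=1}^n p_jx_j\big\|}{\sum_{j=1}^n p_j\|x_j\|}\ \ge\ \frac12\min_{1\le j\le n}\left\{\frac{\|a\|^2-\|a-x_j\|^2}{\|x_j\|\,\|a\|}\right\}\ (\ge 0).$$ The constant $\tfrac12$ is best possible: if $X\neq\{0\}$, there is no constant $E>\tfrac12$ such that the inequality with $\tfrac12$ replaced by $E$ holds for all such $n$, $x_j$, $a$, $p_j$. *)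

theory Defs
  imports "HOL-Analysis.Analysis"
begin

definition dd_hyps :: "'a::real_normed_vector \<Rightarrow> (nat \<Rightarrow> 'a) \<Rightarrow> (nat \<Rightarrow> real) \<Rightarrow> nat \<Rightarrow> bool" where
  "dd_hyps a x p n \<longleftrightarrow> a \<noteq> 0 \<and> (\<forall>j\<in>{1..n}. x j \<noteq> 0 \<and> norm (x j - a) \<le> norm a)
     \<and> (\<forall>j\<in>{1..n}. p j \<ge> 0) \<and> (\<Sum>j=1..n. p j) = 1"

definition dd_min :: "'a::real_normed_vector \<Rightarrow> (nat \<Rightarrow> 'a) \<Rightarrow> nat \<Rightarrow> real" where
  "dd_min a x n = Min ((\<lambda>j. ((norm a)\<^sup>2 - (norm (a - x j))\<^sup>2) / (norm (x j) * norm a)) ` {1..n})"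

definition dd_ineq :: "real \<Rightarrow> 'a::real_normed_vector \<Rightarrow> (nat \<Rightarrow> 'a) \<Rightarrow> (nat \<Rightarrow> real) \<Rightarrow> nat \<Rightarrow> bool" where
  "dd_ineq E a x p n \<longleftrightarrow>
     norm (\<Sum>j=1..n. p j *\<^sub>R x j) / (\<Sum>j=1..n. p j * norm (x j)) \<ge> E * dd_min a x n"

end

theory Submission
  imports Defs
begin

text \<open>Write \<open>s = \<parallel>a\<parallel>\<close> and \<open>d\<^sub>j = \<parallel>a - x\<^sub>j\<parallel> \<le> s\<close>. Since \<open>s\<^sup>2 - d\<^sub>j\<^sup>2 = (s - d\<^sub>j)(s + d\<^sub>j) \<le> 2s (s - d\<^sub>j)\<close>,
  the minimum \<open>m\<close> satisfies \<open>m/2 \<parallel>x\<^sub>j\<parallel> \<le> s - d\<^sub>j\<close> for every \<open>j\<close>. Averaging with the weights \<open>p\<^sub>j\<close>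
  and using the triangle inequality twice,
  \<open>\<parallel>\<Sum> p\<^sub>j x\<^sub>j\<parallel> \<ge> s - \<parallel>\<Sum> p\<^sub>j (a - x\<^sub>j)\<parallel> \<ge> \<Sum> p\<^sub>j (s - d\<^sub>j) \<ge> m/2 \<Sum> p\<^sub>j \<parallel>x\<^sub>j\<parallel>\<close>.
  For sharpness take \<open>n = 1\<close> and \<open>x\<^sub>1 = t v\<close>, \<open>a = v\<close>: the left side is \<open>1\<close> and the minimum is
  \<open>2 - t\<close>, so a constant \<open>E\<close> forces \<open>E (2 - t) \<le> 1\<close> for all small \<open>t > 0\<close>.\<close>

lemma norm_diff_ge_square_defect:
  fixes a y :: "'a::real_normed_vector"
  assumes "a \<noteq> 0" and "norm (a - y) \<le> norm a"
  shows "((norm a)\<^sup>2 - (norm (a - y))\<^sup>2) / (2 * norm a) \<le> norm a - norm (a - y)"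
proof -
  have "(norm a)\<^sup>2 - (norm (a - y))\<^sup>2 = (norm a - norm (a - y)) * (norm a + norm (a - y))"
    by (simp add: power2_eq_square algebra_simps)
  also have "\<dots> \<le> (norm a - norm (a - y)) * (2 * norm a)"
    using assms(2) by (intro mult_left_mono) auto
  finally show ?thesis
    using assms(1) by (simp add: divide_le_eq)
qed

lemma norm_convex_comb_ge:
  fixes a :: "'a::real_normed_vector"
  assumes "\<And>j. j \<in> S \<Longrightarrow> p j \<ge> 0" and "(\<Sum>j\<in>S. p j) = 1"
  shows "norm a - (\<Sum>j\<in>S. p j * norm (a - x j)) \<le> norm (\<Sum>j\<in>S. p j *\<^sub>R x j)"
proof -
  have "a - (\<Sum>j\<in>S. p j *\<^sub>R x j) = (\<Sum>j\<in>S. p j *\<^sub>R (a - x j))"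
    using assms(2) by (simp add: scaleR_diff_right sum_subtractf scaleR_sum_left[symmetric])
  then have "norm (a - (\<Sum>j\<in>S. p j *\<^sub>R x j)) \<le> (\<Sum>j\<in>S. p j * norm (a - x j))"
    using assms(1) by (auto intro: order.trans[OF norm_sum] sum_mono)
  moreover have "norm a - norm (a - (\<Sum>j\<in>S. p j *\<^sub>R x j)) \<le> norm (\<Sum>j\<in>S. p j *\<^sub>R x j)"
    using norm_triangle_ineq2[of a "a - (\<Sum>j\<in>S. p j *\<^sub>R x j)"] by simp
  ultimately show ?thesis
    by linarith
qed

lemma half_min_weighted_norm_le_norm_convex_comb:
  fixes a :: "'a::real_normed_vector"
  assumes "a \<noteq> 0"
    and "\<And>j. j \<in> S \<Longrightarrow> x j \<noteq> 0 \<and> norm (a - x j) \<le> norm a"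
    and "\<And>j. j \<in> S \<Longrightarrow> p j \<ge> 0" and "(\<Sum>j\<in>S. p j) = 1"
    and "\<And>j. j \<in> S \<Longrightarrow> m \<le> ((norm a)\<^sup>2 - (norm (a - x j))\<^sup>2) / (norm (x j) * norm a)"
  shows "m / 2 * (\<Sum>j\<in>S. p j * norm (x j)) \<le> norm (\<Sum>j\<in>S. p j *\<^sub>R x j)"
proof -
  have pointwise: "m / 2 * norm (x j) \<le> norm a - norm (a - x j)" if j: "j \<in> S" for j
  proof -
    have "m * (norm (x j) * norm a) \<le> (norm a)\<^sup>2 - (norm (a - x j))\<^sup>2"
      using assms(1) assms(2,5)[OF j] by (simp add: pos_le_divide_eq)
    then have "m / 2 * norm (x j) \<le> ((norm a)\<^sup>2 - (norm (a - x j))\<^sup>2) / (2 * norm a)"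
      using assms(1) by (simp add: le_divide_eq algebra_simps)
    also have "\<dots> \<le> norm a - norm (a - x j)"
      using norm_diff_ge_square_defect assms(1,2) j by blast
    finally show ?thesis .
  qed
  have "m / 2 * (\<Sum>j\<in>S. p j * norm (x j)) = (\<Sum>j\<in>S. p j * (m / 2 * norm (x j)))"
    by (simp add: sum_distrib_left algebra_simps)
  also have "\<dots> \<le> (\<Sum>j\<in>S. p j * (norm a - norm (a - x j)))"
    using pointwise assms(3) by (intro sum_mono mult_left_mono) auto
  also have "\<dots> = norm a - (\<Sum>j\<in>S. p j * norm (a - x j))"
    using assms(4) by (simp add: right_diff_distrib sum_subtractf sum_distrib_right[symmetric])
  also have "\<dots> \<le> norm (\<Sum>j\<in>S. p j *\<^sub>R x j)"
    using norm_convex_comb_ge assms(3,4) by blast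
  finally show ?thesis .
qed

lemma weighted_norm_sum_pos:
  fixes x :: "'b \<Rightarrow> 'a::real_normed_vector"
  assumes "\<And>j. j \<in> S \<Longrightarrow> x j \<noteq> 0" and "\<And>j. j \<in> S \<Longrightarrow> p j \<ge> 0" and "(\<Sum>j\<in>S. p j) = 1"
  shows "(\<Sum>j\<in>S. p j * norm (x j)) > 0"
proof -
  obtain j where "j \<in> S" "p j > 0"
    using assms(2,3) by (metis less_eq_real_def sum.neutral zero_neq_one)
  moreover have "finite S"
    using assms(3) by (metis sum.infinite zero_neq_one)
  ultimately show ?thesis
    using assms(1,2) by (intro sum_pos2[of _ j]) auto
qed

lemma dd_hyps_dd_min_nonneg:
  assumes "dd_hyps a x p n"
  shows "dd_min a x n \<ge> 0"
proof -
  have "{1..n} \<noteq> {}"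
    using assms by (cases "n = 0") (auto simp: dd_hyps_def)
  moreover have "(norm (a - x j))\<^sup>2 \<le> (norm a)\<^sup>2" if "j \<in> {1..n}" for j
    using assms that by (auto simp: dd_hyps_def norm_minus_commute intro: power_mono)
  ultimately show ?thesis
    unfolding dd_min_def by (subst Min_ge_iff) auto
qed

lemma dd_hyps_dd_ineq_half:
  assumes "dd_hyps a x p n"
  shows "dd_ineq (1/2) a x p n"
proof -
  have hyps: "a \<noteq> 0" "\<And>j. j \<in> {1..n} \<Longrightarrow> x j \<noteq> 0 \<and> norm (a - x j) \<le> norm a"
    "\<And>j. j \<in> {1..n} \<Longrightarrow> p j \<ge> 0" "(\<Sum>j=1..n. p j) = 1"
    using assms by (auto simp: dd_hyps_def norm_minus_commute)
  have "dd_min a x n \<le> ((norm a)\<^sup>2 - (norm (a - x j))\<^sup>2) / (norm (x j) * norm a)"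
    if "j \<in> {1..n}" for j
    unfolding dd_min_def using that by simp
  then have "dd_min a x n / 2 * (\<Sum>j=1..n. p j * norm (x j)) \<le> norm (\<Sum>j=1..n. p j *\<^sub>R x j)"
    using hyps by (intro half_min_weighted_norm_le_norm_convex_comb) auto
  moreover have "(\<Sum>j=1..n. p j * norm (x j)) > 0"
    using hyps by (intro weighted_norm_sum_pos) auto
  ultimately show ?thesis
    unfolding dd_ineq_def by (simp add: pos_le_divide_eq)
qed

lemma dd_min_scaled_single:
  fixes v :: "'a::real_normed_vector"
  assumes "v \<noteq> 0" and "t > 0"
  shows "dd_min v (\<lambda>_. t *\<^sub>R v) 1 = 2 - t"
proof -
  have "norm (v - t *\<^sub>R v) = \<bar>1 - t\<bar> * norm v"
    by (metis norm_scaleR scaleR_collapse scaleR_left_diff_distrib scaleR_one)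
  then show ?thesis
    using assms unfolding dd_min_def by (simp add: field_simps power2_eq_square)
qed

lemma dd_ineq_scaled_single_iff:
  fixes v :: "'a::real_normed_vector"
  assumes "v \<noteq> 0" and "t > 0"
  shows "dd_ineq E v (\<lambda>_. t *\<^sub>R v) (\<lambda>_. 1) 1 \<longleftrightarrow> E * (2 - t) \<le> 1"
  using assms dd_min_scaled_single[OF assms] by (simp add: dd_ineq_def)

lemma dd_ineq_not_valid_above_half:
  fixes v :: "'a::real_normed_vector"
  assumes "v \<noteq> 0" and "E > 1/2"
  shows "\<not> (\<forall>n (a::'a) x p. dd_hyps a x p n \<longrightarrow> dd_ineq E a x p n)"
proof
  assume valid: "\<forall>n (a::'a) x p. dd_hyps a x p n \<longrightarrow> dd_ineq E a x p n"
  define t where "t = 1 - 1 / (2 * E)"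
  have t: "0 < t" "t < 1"
    using assms(2) by (auto simp: t_def field_simps)
  have "norm (t *\<^sub>R v - v) = (1 - t) * norm v"
    using t by (metis abs_of_pos diff_gt_0_iff_gt norm_minus_commute norm_scaleR
        scaleR_collapse scaleR_left_diff_distrib scaleR_one)
  then have "dd_hyps v (\<lambda>_. t *\<^sub>R v) (\<lambda>_. 1) 1"
    using assms(1) t by (simp add: dd_hyps_def)
  then have "E * (2 - t) \<le> 1"
    using valid dd_ineq_scaled_single_iff[OF assms(1) t(1)] by blast
  moreover have "E * (2 - t) = E + 1/2"
    using assms(2) by (simp add: t_def field_simps)
  ultimately show False
    using assms(2) by simp
qed

theorem theorem2p2:
  shows "(\<forall>n (a::'a::real_normed_vector) x p. dd_hyps a x p n \<longrightarrow>
            dd_ineq (1/2) a x p n \<and> dd_min a x n \<ge> 0)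
       \<and> ((\<exists>v::'a. v \<noteq> 0) \<longrightarrow>
            (\<forall>E > 1/2. \<not> (\<forall>n (a::'a) x p. dd_hyps a x p n \<longrightarrow> dd_ineq E a x p n)))"
  using dd_hyps_dd_ineq_half dd_hyps_dd_min_nonneg dd_ineq_not_valid_above_half by blast

end
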